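(* Let $d\geq 10$ and let $g\in C^\infty([0,\infty))$ solve $$g''+\left(\frac{d-3}{y}-\frac{y}{2}\right)g'-\frac{d-2}{y^2}\,g(g-1)(g-2)=0\quad (y>0)$$ with $g(0)=g'(0)=0$ and $g''(0)=a>0$. Let $h(y)=y^3g'(y)$. Then $h'(y)>0$ for all $y>0$, and $\lim_{y\to\infty}h(y)=+\infty$. *)

theory Defs
  imports "HOL-Analysis.Analysis"
begin

text \<open>C-infinity on the closed half-line [0,oo): D is the sequence of derivatives,
  D 0 = g, and each D n is differentiable on [0,oo) (one-sided at 0) with derivative D (Suc n).\<close>
definition smooth_halfline :: "(real \<Rightarrow> real) \<Rightarrow> (nat \<Rightarrow> real \<Rightarrow> real) \<Rightarrow> bool" where
  "smooth_halfline g D \<longleftrightarrow> D 0 = g \<and>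
     (\<forall>n y. y \<ge> 0 \<longrightarrow> (D n has_real_derivative D (Suc n) y) (at y within {0..}))"

end

theory Submission
  imports Defs
begin

(* Let c = d and write G(g) = g(g-1)(g-2) and h(y) = y^3 g'(y).  Eliminating g'' with the
   equation gives the "flux"
       h'(y) = K(y) = g'(y) (y^4/2 - (c-6) y^2) + (c-2) y G(g(y)),
   and a second differentiation, again using the equation, yields with m = c - 7
       (y^m e^(-y^2/4) K)' = y^m e^(-y^2/4) * y g' * ((c-10) + 3(c-2)(g-1)^2).
   For c >= 10 the last factor is nonnegative, so the weighted flux W = y^m e^(-y^2/4) K is
   nondecreasing wherever g' >= 0.  Near 0 we have K(y) ~ 4a y^3 > 0.  If K had a first zero z,
   then h(0) = 0 and h' = K > 0 on (0,z) give g' > 0 on (0,z], hence W(u) <= W(z) <= 0 for small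
   u > 0, contradicting W(u) > 0.  So h' = K > 0 everywhere, W is nondecreasing on [1,oo), and
   since the weight y^m e^(-y^2/4) is bounded there, K is bounded below by a positive constant
   on [1,oo); thus h grows at least linearly.
   The file first collects three general real-analysis facts (a first-zero argument, a linear
   growth criterion, a bound on the Gaussian weight), then develops the computation above in a
   locale for solutions of the equation on (0,oo), and finally instantiates it. *)


lemma smooth_halfline_deriv_at:
  assumes "smooth_halfline g D" and "y > 0"
  shows "(D n has_real_derivative D (Suc n) y) (at y)"
proof -
  have "(D n has_real_derivative D (Suc n) y) (at y within {0..})"
    using assms by (simp add: smooth_halfline_def)
  moreover have "at y within {0..} = at y"
    using assms(2) by (intro at_within_interior) auto
  ultimately show ?thesis by simp
qed

lemma smooth_halfline_tendsto_at_right: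
  assumes "smooth_halfline g D"
  shows "(D n \<longlongrightarrow> D n 0) (at_right 0)"
proof -
  have "(D n has_real_derivative D (Suc n) 0) (at 0 within {0..})"
    using assms by (simp add: smooth_halfline_def)
  then have "(D n \<longlongrightarrow> D n 0) (at 0 within {0..})"
    by (rule DERIV_continuous[unfolded continuous_within])
  then show ?thesis by (rule tendsto_within_subset) auto
qed

lemma linear_growth_at_top:
  fixes f f' :: "real \<Rightarrow> real" and b \<epsilon> :: real
  assumes eps: "\<epsilon> > 0"
    and deriv: "\<And>y. y \<ge> b \<Longrightarrow> (f has_real_derivative f' y) (at y)"
    and slope: "\<And>y. y \<ge> b \<Longrightarrow> f' y \<ge> \<epsilon>"
  shows "filterlim f at_top at_top"
proof -
  have above_line: "\<epsilon> * y + (f b - \<epsilon> * b) \<le> f y" if "y \<ge> b" for y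
  proof -
    have "f b - \<epsilon> * b \<le> f y - \<epsilon> * y"
    proof (rule DERIV_nonneg_imp_nondecreasing[OF that])
      fix t assume "b \<le> t"
      then show "\<exists>s. ((\<lambda>t. f t - \<epsilon> * t) has_real_derivative s) (at t) \<and> s \<ge> 0"
        using deriv[of t] slope[of t]
        by (intro exI[of _ "f' t - \<epsilon>"] conjI derivative_eq_intros) auto
    qed
    then show ?thesis by simp
  qed
  have "filterlim (\<lambda>y. \<epsilon> * y + (f b - \<epsilon> * b)) at_top at_top"
    using filterlim_tendsto_add_at_top[OF tendsto_const[of "f b - \<epsilon> * b"]
            filterlim_tendsto_pos_mult_at_top[OF tendsto_const eps filterlim_ident]]
    by (simp add: add.commute)
  then show ?thesis
    by (rule filterlim_at_top_mono) (use above_line in \<open>auto simp: eventually_at_top_linorder\<close>)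
qed

(* First-zero argument: K is positive near 0, and the weighted quantity w K cannot decrease
   on any interval (u,v) on which K is still positive at every point before v.  Then K can
   never vanish, since at its first zero z we would get 0 < w u K u <= w z K z <= 0. *)
lemma positive_by_weighted_monotonicity:
  fixes K w :: "real \<Rightarrow> real" and \<delta> :: real
  assumes cont: "continuous_on {0<..} K"
    and near_zero: "\<delta> > 0" "\<And>y. 0 < y \<Longrightarrow> y < \<delta> \<Longrightarrow> K y > 0"
    and weight_pos: "\<And>y. y > 0 \<Longrightarrow> w y > 0"
    and mono: "\<And>u v. 0 < u \<Longrightarrow> u < v \<Longrightarrow> (\<And>t. 0 < t \<Longrightarrow> t < v \<Longrightarrow> K t > 0)
                 \<Longrightarrow> w u * K u \<le> w v * K v"
    and y: "y > 0"
  shows "K y > 0"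
proof (rule ccontr)
  assume "\<not> K y > 0"
  define u where "u = \<delta> / 2"
  have u: "0 < u" "u < \<delta>" "K u > 0" using near_zero unfolding u_def by auto
  have "y \<ge> \<delta>" using near_zero(2) y \<open>\<not> K y > 0\<close> by force
  define S where "S = {t \<in> {u..y}. K t \<le> 0}"
  have "closed S" unfolding S_def
    by (intro continuous_on_closed_Collect_le continuous_on_subset[OF cont] continuous_on_const)
       (use u in auto)
  moreover have "y \<in> S" using \<open>y \<ge> \<delta>\<close> u \<open>\<not> K y > 0\<close> unfolding S_def by auto
  moreover have "bdd_below S" unfolding S_def by (rule bdd_belowI[of _ u]) auto
  ultimately have "Inf S \<in> S" using closed_contains_Inf by blast
  define z where "z = Inf S"
  have z: "u \<le> z" "K z \<le> 0" using \<open>Inf S \<in> S\<close> unfolding z_def S_def by auto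
  have before_z: "K t > 0" if "0 < t" "t < z" for t
  proof (cases "t < u")
    case True then show ?thesis using near_zero that u by auto
  next
    case False
    have "t \<notin> S" using cInf_lower[OF _ \<open>bdd_below S\<close>, of t] that unfolding z_def by auto
    then show ?thesis using False that z \<open>Inf S \<in> S\<close> unfolding S_def z_def by auto
  qed
  have "u < z" using z u by (cases "u = z") auto
  have "0 < w u * K u" using weight_pos u by simp
  also have "\<dots> \<le> w z * K z" using mono[OF u(1) \<open>u < z\<close> before_z] .
  also have "\<dots> \<le> 0" using weight_pos[of z] z u by (simp add: mult_nonneg_nonpos)
  finally show False by simp
qed

(* The weight y^m e^(-y^2/4) is bounded on [1,oo), via x <= e^x for x = y^2/(4m). *)
lemma gaussian_weight_bound:
  fixes m :: nat and y :: real
  assumes "m > 0" and "y \<ge> 1"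
  shows "y ^ m * exp (-(y^2/4)) \<le> (4 * real m) ^ m"
proof -
  define x where "x = y^2 / (4 * m)"
  have "y / (4 * m) \<le> x"
    unfolding x_def using assms by (intro divide_right_mono) (auto simp: power2_eq_square)
  also have "x \<le> exp x" using exp_ge_add_one_self[of x] by linarith
  finally have "(y / (4 * m)) ^ m \<le> exp x ^ m" using assms by (intro power_mono) auto
  also have "exp x ^ m = exp (y^2/4)"
    unfolding x_def exp_of_nat_mult[symmetric] using assms by simp
  finally have "y ^ m \<le> (4 * m) ^ m * exp (y^2/4)"
    using assms by (simp add: power_divide field_simps)
  then show ?thesis by (simp add: exp_minus field_simps)
qed

locale profile_equation =
  fixes d :: nat and g p q :: "real \<Rightarrow> real"
  assumes dimension: "d \<ge> 10"
    and g_deriv: "\<And>y. y > 0 \<Longrightarrow> (g has_real_derivative p y) (at y)"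
    and p_deriv: "\<And>y. y > 0 \<Longrightarrow> (p has_real_derivative q y) (at y)"
    and p_cont: "continuous_on {0..} p"
    and equation: "\<forall>y>0. q y + ((real d - 3) / y - y / 2) * p y
                      - (real d - 2) / y^2 * (g y * (g y - 1) * (g y - 2)) = 0"
begin

(* The flux K = h' for h(y) = y^3 g'(y), written without g''. *)
definition flux :: "real \<Rightarrow> real" where
  "flux y = p y * (y^4/2 - (real d - 6) * y^2) + (real d - 2) * y * (g y * (g y - 1) * (g y - 2))"

(* The integrating weight y^(d-7) e^(-y^2/4). *)
definition weight :: "real \<Rightarrow> real" where
  "weight y = y ^ (d - 7) * exp (-(y^2/4))"

(* With it, (weight * flux)' = weight * y g' * defect; the defect is nonnegative for d >= 10. *)
definition defect :: "real \<Rightarrow> real" where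
  "defect y = (real d - 10) + 3 * (real d - 2) * (g y - 1)^2"

lemma q_eq: "y > 0 \<Longrightarrow> q y = (real d - 2) / y^2 * (g y * (g y - 1) * (g y - 2))
                                  - ((real d - 3) / y - y / 2) * p y"
  using equation by (simp add: algebra_simps)

lemma flux_eq: "y > 0 \<Longrightarrow> flux y = 3 * y^2 * p y + y^3 * q y"
  by (simp add: q_eq flux_def field_simps power2_eq_square power3_eq_cube) (simp add: algebra_simps numeral_eq_Suc)

lemma h_deriv: "y > 0 \<Longrightarrow> ((\<lambda>t. t^3 * p t) has_real_derivative flux y) (at y)"
  by (auto intro!: derivative_eq_intros p_deriv simp: flux_eq)

lemma weight_deriv:
  assumes "y > 0"
  shows "(weight has_real_derivative weight y * ((real d - 7) / y - y / 2)) (at y)"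
proof -
  have "d - 7 = Suc (d - 8)" using dimension by simp
  then have "y ^ (d - 7) = y * y ^ (d - 8)" by simp
  then show ?thesis
    unfolding weight_def using assms dimension
    by (auto intro!: derivative_eq_intros simp: field_simps of_nat_diff)
qed

lemma flux_deriv:
  assumes "y > 0"
  shows "(flux has_real_derivative
            q y * (y^4/2 - (real d - 6) * y^2) + p y * (2 * y^3 - 2 * (real d - 6) * y)
            + (real d - 2) * (g y * (g y - 1) * (g y - 2))
            + (real d - 2) * y * (3 * (g y)^2 - 6 * g y + 2) * p y) (at y)"
  unfolding flux_def
  by (auto intro!: derivative_eq_intros g_deriv p_deriv assms
           simp: algebra_simps power2_eq_square power3_eq_cube numeral_eq_Suc)

lemma flux_balance:
  assumes "y > 0"
  shows "q y * (y^4/2 - (real d - 6) * y^2) + p y * (2 * y^3 - 2 * (real d - 6) * y)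
            + (real d - 2) * (g y * (g y - 1) * (g y - 2))
            + (real d - 2) * y * (3 * (g y)^2 - 6 * g y + 2) * p y
         + ((real d - 7) / y - y / 2) * flux y = y * p y * defect y"
  unfolding q_eq[OF assms] flux_def defect_def using assms
  by (simp add: field_simps power2_eq_square power3_eq_cube) (simp add: algebra_simps numeral_eq_Suc)

lemma weighted_flux_deriv:
  assumes "y > 0"
  shows "((\<lambda>t. weight t * flux t) has_real_derivative weight y * (y * p y * defect y)) (at y)"
  by (rule DERIV_cong[OF DERIV_mult[OF weight_deriv[OF assms] flux_deriv[OF assms]]],
      subst flux_balance[OF assms, symmetric]) (simp add: algebra_simps)

lemma defect_nonneg: "defect y \<ge> 0"
  unfolding defect_def using dimension by simp

lemma weighted_flux_mono:
  assumes "0 < u" "u \<le> v" and p_nonneg: "\<And>t. u \<le> t \<Longrightarrow> t \<le> v \<Longrightarrow> p t \<ge> 0"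
  shows "weight u * flux u \<le> weight v * flux v"
proof (rule DERIV_nonneg_imp_nondecreasing[OF \<open>u \<le> v\<close>])
  fix t assume t: "u \<le> t" "t \<le> v"
  have "weight t * (t * p t * defect t) \<ge> 0"
    using t \<open>0 < u\<close> p_nonneg[OF t] defect_nonneg[of t] by (simp add: weight_def)
  then show "\<exists>s. ((\<lambda>t. weight t * flux t) has_real_derivative s) (at t) \<and> s \<ge> 0"
    using weighted_flux_deriv[of t] t \<open>0 < u\<close> by auto
qed

(* If h' > 0 on (0,x) then h(x) > h(0) = 0, i.e. g'(x) > 0. *)
lemma p_pos_before_zero:
  assumes "x > 0" and flux_pos: "\<And>t. 0 < t \<Longrightarrow> t < x \<Longrightarrow> flux t > 0"
  shows "p x > 0"
proof -
  have "continuous_on {0..x} (\<lambda>t. t^3 * p t)"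
    by (intro continuous_intros continuous_on_subset[OF p_cont]) auto
  then have "0^3 * p 0 < x^3 * p x"
    using DERIV_pos_imp_increasing_open[OF \<open>x > 0\<close>, of "\<lambda>t. t^3 * p t"] h_deriv flux_pos
    by auto
  then show ?thesis using \<open>x > 0\<close> by (simp add: zero_less_mult_iff)
qed

(* Near the origin K(y) = y^3 (3 g'(y)/y + g''(y)) with 3 g'(y)/y + g''(y) -> 4 g''(0). *)
lemma flux_pos_near_zero:
  assumes "p 0 = 0" and "(p has_real_derivative a) (at 0 within {0..})"
    and "(q \<longlongrightarrow> a) (at_right 0)" and "a > 0"
  shows "\<exists>\<delta>>0. \<forall>y. 0 < y \<longrightarrow> y < \<delta> \<longrightarrow> flux y > 0"
proof -
  have "((\<lambda>y. (p y - p 0) / (y - 0)) \<longlongrightarrow> a) (at 0 within {0..})"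
    using assms(2) by (simp add: has_field_derivative_iff)
  then have "((\<lambda>y. p y / y) \<longlongrightarrow> a) (at_right 0)"
    using assms(1) by (auto intro: tendsto_within_subset)
  then have "((\<lambda>y. 3 * (p y / y) + q y) \<longlongrightarrow> 3 * a + a) (at_right 0)"
    by (intro tendsto_intros assms(3))
  then have "\<forall>\<^sub>F y in at_right 0. 3 * (p y / y) + q y > 0"
    using order_tendstoD(1)[of _ "3 * a + a" _ 0] \<open>a > 0\<close> by simp
  then have "\<forall>\<^sub>F y in at_right 0. flux y > 0"
    using eventually_at_right_less[of "0::real"]
  proof eventually_elim
    case (elim y)
    then have "flux y = y^3 * (3 * (p y / y) + q y)"
      by (simp add: flux_eq field_simps power2_eq_square power3_eq_cube)
    then show ?case using elim by simp
  qed
  then show ?thesis unfolding eventually_at_right_field by auto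
qed

lemma flux_pos:
  assumes near_zero: "\<delta> > 0" "\<And>y. 0 < y \<Longrightarrow> y < \<delta> \<Longrightarrow> flux y > 0" and "y > 0"
  shows "flux y > 0"
proof (rule positive_by_weighted_monotonicity[OF _ near_zero _ _ \<open>y > 0\<close>])
  show "continuous_on {0<..} flux"
    by (intro continuous_at_imp_continuous_on ballI DERIV_isCont[OF flux_deriv]) auto
  show "weight t > 0" if "t > 0" for t
    using that by (simp add: weight_def)
  show "weight u * flux u \<le> weight v * flux v"
    if "0 < u" "u < v" and "\<And>t. 0 < t \<Longrightarrow> t < v \<Longrightarrow> flux t > 0" for u v
    using that by (intro weighted_flux_mono less_imp_le p_pos_before_zero) auto
qed

(* Once K > 0 everywhere, monotonicity of the weighted flux bounds K below on [1,oo). *)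
lemma flux_lower_bound:
  assumes flux_pos: "\<And>t. t > 0 \<Longrightarrow> flux t > 0" and "y \<ge> 1"
  shows "flux y \<ge> weight 1 * flux 1 / (4 * real (d - 7)) ^ (d - 7)"
proof -
  have "weight 1 * flux 1 \<le> weight y * flux y"
  proof (rule weighted_flux_mono)
    show "p t \<ge> 0" if "1 \<le> t" for t
      using p_pos_before_zero[of t] flux_pos that by fastforce
  qed (use \<open>y \<ge> 1\<close> in auto)
  also have "\<dots> \<le> (4 * real (d - 7)) ^ (d - 7) * flux y"
  proof (rule mult_right_mono)
    show "weight y \<le> (4 * real (d - 7)) ^ (d - 7)"
      unfolding weight_def by (rule gaussian_weight_bound) (use dimension assms in auto)
  qed (use flux_pos[of y] \<open>y \<ge> 1\<close> in auto)
  finally show ?thesis using dimension by (simp add: field_simps)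
qed

end

theorem mainTheorem6:
  fixes d :: nat and a :: real and g :: "real \<Rightarrow> real" and D :: "nat \<Rightarrow> real \<Rightarrow> real"
  assumes "d \<ge> 10"
    and "smooth_halfline g D"
    and "\<forall>y>0. D 2 y + ((real d - 3) / y - y / 2) * D 1 y
                - (real d - 2) / y^2 * (g y * (g y - 1) * (g y - 2)) = 0"
    and "g 0 = 0" and "D 1 0 = 0" and "D 2 0 = a" and "a > 0"
  shows "(\<forall>y>0. deriv (\<lambda>t. t^3 * D 1 t) y > 0)
         \<and> filterlim (\<lambda>t. t^3 * D 1 t) at_top at_top"
proof -
  have D_deriv: "\<And>n y. y > 0 \<Longrightarrow> (D n has_real_derivative D (Suc n) y) (at y)"
    using smooth_halfline_deriv_at[OF assms(2)] .
  interpret profile_equation d g "D 1" "D 2"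
  proof
    show "continuous_on {0..} (D 1)"
      using assms(2) unfolding smooth_halfline_def continuous_on_eq_continuous_within
      by (blast intro: DERIV_continuous)
  qed (use assms(1,2,3) D_deriv[of _ 0] D_deriv[of _ 1] in
       \<open>auto simp: smooth_halfline_def numeral_2_eq_2\<close>)
  obtain \<delta> where "\<delta> > 0" "\<forall>y. 0 < y \<longrightarrow> y < \<delta> \<longrightarrow> flux y > 0"
    using flux_pos_near_zero[of a] smooth_halfline_tendsto_at_right[OF assms(2), of 2] assms(2,5,6,7)
    by (auto simp: smooth_halfline_def numeral_2_eq_2)
  then have pos: "\<And>y. y > 0 \<Longrightarrow> flux y > 0"
    using flux_pos by blast
  have "\<forall>y>0. deriv (\<lambda>t. t^3 * D 1 t) y > 0"
    using pos h_deriv DERIV_imp_deriv by fastforce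
  moreover have "filterlim (\<lambda>t. t^3 * D 1 t) at_top at_top"
  proof (rule linear_growth_at_top[where b = 1 and f' = flux])
    show "weight 1 * flux 1 / (4 * real (d - 7)) ^ (d - 7) > 0"
      using pos[of 1] assms(1) by (simp add: weight_def)
  qed (use h_deriv flux_lower_bound[OF pos] in auto)
  ultimately show ?thesis ..
qed

end
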